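(* Let $\mathcal H$ be a Hilbert space, $A$ a bounded, everywhere defined, symmetric operator on $\mathcal H$, and $P$ a self-adjoint operator on $\mathcal H$. Suppose that $D(PA)=D(P)$ (where $D(PA)=\{x\in\mathcal H: Ax\in D(P)\}$) and that there is a bounded operator $B$ on $\mathcal H$ with $BD(P)\subset D(P)$ such that $PAf-APf=Bf$ for every $f\in D(P)$. Then $AP$ is closed and $APA$ is self-adjoint.
   Context: Products of operators carry their natural domains; $D(AP)=D(P)$ and $D(APA)=D(PA)$. *)

theory Defs
  imports "HOL-Analysis.Analysis"
begin

text \<open>Complex Hilbert spaces (the library only has real inner product spaces):
  a complete real normed space with a complex scalar multiplication extending the
  real one and a complex inner product (conjugate-linear in the first argument)
  inducing the norm.\<close>

class chilbert_space = real_normed_vector + complete_space +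
  fixes scaleC :: "complex \<Rightarrow> 'a \<Rightarrow> 'a"
    and cinner :: "'a \<Rightarrow> 'a \<Rightarrow> complex"
  assumes scaleC_of_real: "scaleC (complex_of_real r) x = scaleR r x"
    and scaleC_add_right: "scaleC c (x + y) = scaleC c x + scaleC c y"
    and scaleC_add_left: "scaleC (c + d) x = scaleC c x + scaleC d x"
    and scaleC_scaleC: "scaleC c (scaleC d x) = scaleC (c * d) x"
    and scaleC_one: "scaleC 1 x = x"
    and cinner_commute: "cinner x y = cnj (cinner y x)"
    and cinner_add_left: "cinner (x + y) z = cinner x z + cinner y z"
    and cinner_scaleC_left: "cinner (scaleC c x) y = cnj c * cinner x y"
    and cinner_self_real: "Im (cinner x x) = 0"
    and cinner_self_nonneg: "0 \<le> Re (cinner x x)"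
    and cinner_self_eq_0: "cinner x x = 0 \<longleftrightarrow> x = 0"
    and norm_eq_sqrt_cinner: "norm x = sqrt (Re (cinner x x))"

definition csubspace :: "'a::chilbert_space set \<Rightarrow> bool" where
  "csubspace S \<longleftrightarrow> 0 \<in> S \<and> (\<forall>x\<in>S. \<forall>y\<in>S. x + y \<in> S) \<and> (\<forall>c. \<forall>x\<in>S. scaleC c x \<in> S)"

definition linear_op :: "'a::chilbert_space set \<Rightarrow> ('a \<Rightarrow> 'a) \<Rightarrow> bool" where
  "linear_op D T \<longleftrightarrow> csubspace D \<and>
     (\<forall>x\<in>D. \<forall>y\<in>D. T (x + y) = T x + T y) \<and>
     (\<forall>c. \<forall>x\<in>D. T (scaleC c x) = scaleC c (T x))"

definition bounded_op :: "('a::chilbert_space \<Rightarrow> 'a) \<Rightarrow> bool" where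
  "bounded_op T \<longleftrightarrow> linear_op UNIV T \<and> (\<exists>K. \<forall>x. norm (T x) \<le> K * norm x)"

definition symmetric_bounded_op :: "('a::chilbert_space \<Rightarrow> 'a) \<Rightarrow> bool" where
  "symmetric_bounded_op T \<longleftrightarrow> bounded_op T \<and> (\<forall>x y. cinner (T x) y = cinner x (T y))"

definition op_graph :: "'a set \<Rightarrow> ('a \<Rightarrow> 'a) \<Rightarrow> ('a \<times> 'a) set" where
  "op_graph D T = {(x, T x) | x. x \<in> D}"

definition adjoint_graph :: "'a::chilbert_space set \<Rightarrow> ('a \<Rightarrow> 'a) \<Rightarrow> ('a \<times> 'a) set" where
  "adjoint_graph D T = {(y, z). \<forall>x\<in>D. cinner (T x) y = cinner x z}"

definition closed_op :: "'a::chilbert_space set \<Rightarrow> ('a \<Rightarrow> 'a) \<Rightarrow> bool" where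
  "closed_op D T \<longleftrightarrow> closed (op_graph D T)"

definition self_adjoint_op :: "'a::chilbert_space set \<Rightarrow> ('a \<Rightarrow> 'a) \<Rightarrow> bool" where
  "self_adjoint_op D T \<longleftrightarrow> linear_op D T \<and> closure D = UNIV \<and> adjoint_graph D T = op_graph D T"

end

theory Submission
  imports Defs
begin

text \<open>Write \<open>D = D(P)\<close>. Since \<open>P\<close> and \<open>A\<close> are symmetric, the commutator \<open>B = PA - AP\<close> is
  skew-symmetric on \<open>D\<close>, and by boundedness of \<open>B\<close> and density of \<open>D\<close> we get
  \<open>\<langle>Bx, u\<rangle> = -\<langle>x, Bu\<rangle>\<close> for every \<open>u\<close>. Closedness of \<open>AP\<close>: if \<open>f\<^sub>n \<rightarrow> f\<close> and \<open>APf\<^sub>n \<rightarrow> g\<close>, then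
  \<open>PAf\<^sub>n = APf\<^sub>n + Bf\<^sub>n \<rightarrow> g + Bf\<close>, so closedness of \<open>P\<close> gives \<open>Af \<in> D\<close>, hence \<open>f \<in> D\<close> and
  \<open>APf = g\<close>. Self-adjointness of \<open>APA\<close>: it is symmetric on \<open>D\<close>, and if \<open>\<langle>APAx, y\<rangle> = \<langle>x, z\<rangle>\<close>
  for all \<open>x \<in> D\<close>, then rewriting \<open>PA = AP + B\<close> and using skewness of \<open>B\<close> shows that
  \<open>A\<^sup>2y\<close> lies in the domain of \<open>P\<^sup>* = P\<close>; so \<open>y \<in> D\<close>, and density of \<open>D\<close> identifies \<open>z\<close>.\<close>

lemma scaleC_minus_one: "scaleC (-1) (x::'a::chilbert_space) = - x"
  using scaleC_of_real[of "-1" x] by simp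

lemma cinner_minus_left: "cinner (- x) (y::'a::chilbert_space) = - cinner x y"
  using cinner_scaleC_left[of "-1" x y] by (simp add: scaleC_minus_one)

lemma cinner_diff_left: "cinner (x - y) (z::'a::chilbert_space) = cinner x z - cinner y z"
  using cinner_add_left[of x "-y" z] by (simp add: cinner_minus_left)

lemma cinner_add_right: "cinner x (y + z) = cinner x y + cinner x (z::'a::chilbert_space)"
  by (metis cinner_add_left cinner_commute complex_cnj_add)

lemma cinner_diff_right: "cinner x (y - z) = cinner x y - cinner x (z::'a::chilbert_space)"
  by (metis cinner_diff_left cinner_commute complex_cnj_diff)

lemma power2_norm_eq_cinner: "(norm (x::'a::chilbert_space))\<^sup>2 = Re (cinner x x)"
  using norm_eq_sqrt_cinner[of x] cinner_self_nonneg[of x] by simp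

lemma Re_cinner_polarization:
  "Re (cinner a (u::'a::chilbert_space)) = ((norm (a + u))\<^sup>2 - (norm (a - u))\<^sup>2) / 4"
  unfolding power2_norm_eq_cinner
  by (simp add: cinner_add_left cinner_add_right cinner_diff_left cinner_diff_right
      cinner_commute[of u a])

text \<open>Continuity of the inner product via polarization, avoiding Cauchy-Schwarz.\<close>
lemma tendsto_cinner_right:
  fixes f :: "'b \<Rightarrow> 'a::chilbert_space"
  assumes "(f \<longlongrightarrow> l) F"
  shows "((\<lambda>n. cinner a (f n)) \<longlongrightarrow> cinner a l) F"
proof -
  have Re: "((\<lambda>n. Re (cinner b (f n))) \<longlongrightarrow> Re (cinner b l)) F" for b
    unfolding Re_cinner_polarization by (intro tendsto_intros assms) simp_all
  have "Im (cinner b u) = Re (cinner (scaleC \<i> b) u)" for b u :: 'a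
    by (simp add: cinner_scaleC_left)
  then show ?thesis
    unfolding tendsto_complex_iff using Re[of a] Re[of "scaleC \<i> a"] by simp
qed

lemma tendsto_cinner_left:
  fixes f :: "'b \<Rightarrow> 'a::chilbert_space"
  assumes "(f \<longlongrightarrow> l) F"
  shows "((\<lambda>n. cinner (f n) a) \<longlongrightarrow> cinner l a) F"
  using tendsto_cnj[OF tendsto_cinner_right[OF assms, of a]]
  by (simp add: cinner_commute[of _ a])

lemma cinner_dense_eq_0_imp_eq_0:
  fixes w :: "'a::chilbert_space"
  assumes "closure D = UNIV" "\<And>x. x \<in> D \<Longrightarrow> cinner x w = 0"
  shows "w = 0"
proof -
  obtain s where s: "\<And>n. s n \<in> D" "s \<longlonglongrightarrow> w"
    using assms(1) closure_sequential by blast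
  have "(\<lambda>n. cinner (s n) w) \<longlonglongrightarrow> cinner w w"
    by (rule tendsto_cinner_left[OF s(2)])
  moreover have "(\<lambda>n. cinner (s n) w) = (\<lambda>n. 0)"
    using s(1) assms(2) by simp
  ultimately have "(\<lambda>n. 0) \<longlonglongrightarrow> cinner w w" by simp
  then have "cinner w w = 0" by (simp add: LIMSEQ_const_iff)
  then show ?thesis by (simp only: cinner_self_eq_0)
qed

lemma bounded_op_imp_bounded_linear:
  assumes "bounded_op (T::'a::chilbert_space \<Rightarrow> 'a)"
  shows "bounded_linear T"
proof -
  from assms obtain K where K: "\<And>x. norm (T x) \<le> K * norm x"
    and add: "\<And>x y. T (x + y) = T x + T y"
    and scale: "\<And>c x. T (scaleC c x) = scaleC c (T x)"
    unfolding bounded_op_def linear_op_def by blast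
  show ?thesis
  proof (rule bounded_linear_intro[where K = K])
    show "T (x + y) = T x + T y" for x y by (rule add)
    show "T (r *\<^sub>R x) = r *\<^sub>R T x" for r x
      using scale[of "complex_of_real r" x] by (simp add: scaleC_of_real)
    show "norm (T x) \<le> norm x * K" for x
      using K[of x] by (simp add: mult.commute)
  qed
qed

lemma continuous_on_cinner_right:
  "continuous_on S f \<Longrightarrow> continuous_on S (\<lambda>p. cinner a (f p :: 'a::chilbert_space))"
  unfolding continuous_on_def by (blast intro: tendsto_cinner_right)

lemma closed_adjoint_graph: "closed (adjoint_graph D (T::'a::chilbert_space \<Rightarrow> 'a))"
proof -
  have "closed {p. cinner (T x) (fst p) = cinner x (snd p)}" for x
    by (rule closed_Collect_eq; rule continuous_on_cinner_right, rule continuous_on_fst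
        continuous_on_snd, rule continuous_on_id)
  then have "closed (\<Inter>x\<in>D. {p. cinner (T x) (fst p) = cinner x (snd p)})"
    by (blast intro: closed_INT)
  moreover have "adjoint_graph D T = (\<Inter>x\<in>D. {p. cinner (T x) (fst p) = cinner x (snd p)})"
    unfolding adjoint_graph_def by auto
  ultimately show ?thesis by simp
qed

lemma self_adjoint_op_imp_closed_op: "self_adjoint_op D T \<Longrightarrow> closed_op D T"
  unfolding self_adjoint_op_def closed_op_def by (metis closed_adjoint_graph)

lemma self_adjoint_op_cinner_sym:
  assumes "self_adjoint_op D T" "x \<in> D" "y \<in> D"
  shows "cinner (T x) y = cinner x (T y)"
proof -
  have "(y, T y) \<in> adjoint_graph D T"
    using assms unfolding self_adjoint_op_def op_graph_def by auto
  then show ?thesis using assms(2) unfolding adjoint_graph_def by auto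
qed

lemma self_adjoint_op_adjointD:
  assumes "self_adjoint_op D T" "\<And>x. x \<in> D \<Longrightarrow> cinner (T x) y = cinner x z"
  shows "y \<in> D" "T y = z"
proof -
  have "(y, z) \<in> adjoint_graph D T" using assms(2) unfolding adjoint_graph_def by auto
  then show "y \<in> D" "T y = z"
    using assms(1) unfolding self_adjoint_op_def op_graph_def by auto
qed

locale bounded_commutator =
  fixes D :: "'a::chilbert_space set" and P A B :: "'a \<Rightarrow> 'a"
  assumes P_self_adjoint: "self_adjoint_op D P"
    and A_symmetric: "symmetric_bounded_op A"
    and A_maps_domain: "\<And>x. x \<in> D \<Longrightarrow> A x \<in> D"
    and B_bounded: "bounded_linear B"
    and commutator: "\<And>f. f \<in> D \<Longrightarrow> P (A f) - A (P f) = B f"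
begin

lemma A_bounded_linear: "bounded_linear A"
  using A_symmetric bounded_op_imp_bounded_linear unfolding symmetric_bounded_op_def by blast

lemma A_cinner_sym: "cinner (A x) y = cinner x (A y)"
  using A_symmetric unfolding symmetric_bounded_op_def by blast

lemma P_cinner_sym: "x \<in> D \<Longrightarrow> y \<in> D \<Longrightarrow> cinner (P x) y = cinner x (P y)"
  using P_self_adjoint by (rule self_adjoint_op_cinner_sym)

lemma domain_dense: "closure D = UNIV"
  using P_self_adjoint unfolding self_adjoint_op_def by blast

lemma PA_eq_AP_add_B: "f \<in> D \<Longrightarrow> P (A f) = A (P f) + B f"
  using commutator by (metis add.commute diff_add_cancel)

lemma commutator_skew_on_domain:
  assumes "x \<in> D" "u \<in> D"
  shows "cinner (B x) u = - cinner x (B u)"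
proof -
  have "cinner (B x) u = cinner (P (A x)) u - cinner (A (P x)) u"
    by (simp flip: commutator[OF assms(1)] add: cinner_diff_left)
  also have "\<dots> = cinner x (A (P u)) - cinner x (P (A u))"
    using assms by (simp add: P_cinner_sym A_maps_domain A_cinner_sym)
  also have "\<dots> = - cinner x (B u)"
    by (simp flip: commutator[OF assms(2)] add: cinner_diff_right)
  finally show ?thesis .
qed

lemma commutator_skew:
  assumes "x \<in> D"
  shows "cinner (B x) u = - cinner x (B u)"
proof -
  obtain s where s: "\<And>n. s n \<in> D" "s \<longlonglongrightarrow> u"
    using domain_dense closure_sequential by blast
  have "(\<lambda>n. cinner (B x) (s n)) \<longlonglongrightarrow> cinner (B x) u"
    by (rule tendsto_cinner_right[OF s(2)])
  moreover have "(\<lambda>n. - cinner x (B (s n))) \<longlonglongrightarrow> - cinner x (B u)"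
    by (intro tendsto_minus tendsto_cinner_right bounded_linear.tendsto[OF B_bounded] s(2))
  ultimately show ?thesis
    using commutator_skew_on_domain[OF assms s(1)] LIMSEQ_unique by auto
qed

context
  assumes A_reflects_domain: "\<And>x. A x \<in> D \<Longrightarrow> x \<in> D"
begin

lemma closed_op_AP: "closed_op D (\<lambda>x. A (P x))"
  unfolding closed_op_def closed_sequential_limits
proof (intro allI impI, elim conjE)
  fix s and l :: "'a \<times> 'a"
  assume graph: "\<forall>n. s n \<in> op_graph D (\<lambda>x. A (P x))" and lim: "s \<longlonglongrightarrow> l"
  obtain f g where l: "l = (f, g)" by (cases l)
  define fs where "fs n = fst (s n)" for n
  have fs: "fs n \<in> D" "s n = (fs n, A (P (fs n)))" for n
    using graph[rule_format, of n] unfolding op_graph_def fs_def by auto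
  have "fs \<longlonglongrightarrow> f" using tendsto_fst[OF lim] unfolding fs_def l by simp
  moreover have "(\<lambda>n. A (P (fs n))) \<longlonglongrightarrow> g" using tendsto_snd[OF lim] unfolding fs(2) l by simp
  ultimately have lim_graph: "(\<lambda>n. (A (fs n), A (P (fs n)) + B (fs n))) \<longlonglongrightarrow> (A f, g + B f)"
    by (intro tendsto_Pair tendsto_add bounded_linear.tendsto[OF A_bounded_linear]
        bounded_linear.tendsto[OF B_bounded])
  have in_graph: "(A (fs n), A (P (fs n)) + B (fs n)) \<in> op_graph D P" for n
    unfolding op_graph_def using A_maps_domain[OF fs(1)] PA_eq_AP_add_B[OF fs(1)] by force
  have "(A f, g + B f) \<in> op_graph D P"
    using self_adjoint_op_imp_closed_op[OF P_self_adjoint] in_graph lim_graph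
    unfolding closed_op_def by (rule closed_sequentially)
  then have Af: "A f \<in> D" and PAf: "P (A f) = g + B f"
    unfolding op_graph_def by auto
  from Af have f: "f \<in> D" by (rule A_reflects_domain)
  with PAf have "A (P f) = g" using PA_eq_AP_add_B by simp
  with f show "l \<in> op_graph D (\<lambda>x. A (P x))"
    unfolding l op_graph_def by blast
qed

lemma APA_cinner_sym:
  "x \<in> D \<Longrightarrow> y \<in> D \<Longrightarrow> cinner (A (P (A x))) y = cinner x (A (P (A y)))"
  by (simp add: A_cinner_sym A_maps_domain P_cinner_sym)

lemma APA_adjoint_subset: "adjoint_graph D (\<lambda>x. A (P (A x))) \<subseteq> op_graph D (\<lambda>x. A (P (A x)))"
proof
  fix p assume "p \<in> adjoint_graph D (\<lambda>x. A (P (A x)))"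
  then obtain y z where p: "p = (y, z)"
    and adj: "\<And>x. x \<in> D \<Longrightarrow> cinner (A (P (A x))) y = cinner x z"
    unfolding adjoint_graph_def by auto
  have "cinner (P x) (A (A y)) = cinner x (z + B (A y))" if x: "x \<in> D" for x
  proof -
    have "cinner x z = cinner (P (A x)) (A y)" using adj[OF x] A_cinner_sym by simp
    also have "\<dots> = cinner (A (P x)) (A y) + cinner (B x) (A y)"
      by (simp add: PA_eq_AP_add_B[OF x] cinner_add_left)
    also have "\<dots> = cinner (P x) (A (A y)) - cinner x (B (A y))"
      by (simp add: A_cinner_sym commutator_skew[OF x])
    finally show ?thesis by (simp add: cinner_add_right)
  qed
  then have "A (A y) \<in> D" by (rule self_adjoint_op_adjointD[OF P_self_adjoint])
  then have y: "y \<in> D" using A_reflects_domain by blast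
  have "cinner x (z - A (P (A y))) = 0" if "x \<in> D" for x
    using adj[OF that] APA_cinner_sym[OF that y] by (simp add: cinner_diff_right)
  then have "z = A (P (A y))"
    using cinner_dense_eq_0_imp_eq_0[OF domain_dense] by fastforce
  then show "p \<in> op_graph D (\<lambda>x. A (P (A x)))" unfolding p op_graph_def using y by auto
qed

lemma self_adjoint_op_APA: "self_adjoint_op D (\<lambda>x. A (P (A x)))"
proof -
  have "linear_op D (\<lambda>x. A (P (A x)))"
    using P_self_adjoint A_symmetric A_maps_domain
    unfolding self_adjoint_op_def symmetric_bounded_op_def bounded_op_def linear_op_def
    by simp
  moreover have "op_graph D (\<lambda>x. A (P (A x))) \<subseteq> adjoint_graph D (\<lambda>x. A (P (A x)))"
    unfolding op_graph_def adjoint_graph_def using APA_cinner_sym by auto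
  ultimately show ?thesis
    unfolding self_adjoint_op_def using domain_dense APA_adjoint_subset by blast
qed

end

end

theorem mainTheorem2:
  fixes A B P :: "'a::chilbert_space \<Rightarrow> 'a" and DP :: "'a set"
  assumes A_sym: "symmetric_bounded_op A"
    and P_sa: "self_adjoint_op DP P"
    and dom_PA: "{x. A x \<in> DP} = DP"
    and B_bdd: "bounded_op B"
    and B_dom: "B ` DP \<subseteq> DP"
    and comm: "\<And>f. f \<in> DP \<Longrightarrow> P (A f) - A (P f) = B f"
  shows "closed_op DP (\<lambda>x. A (P x)) \<and> self_adjoint_op {x. A x \<in> DP} (\<lambda>x. A (P (A x)))"
proof -
  interpret bounded_commutator DP P A B
    using P_sa A_sym dom_PA bounded_op_imp_bounded_linear[OF B_bdd] comm
    by (intro bounded_commutator.intro) auto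
  have "\<And>x. A x \<in> DP \<Longrightarrow> x \<in> DP" using dom_PA by blast
  with closed_op_AP self_adjoint_op_APA show ?thesis
    unfolding dom_PA by blast
qed

end
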